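(* The orbit space $\mathbb{R}P^5/\mathbb{Z}_2^4$ is homeomorphic to the quotient space $(\Delta_{4,2}\times\mathbb{R}P^2)/\approx$, where $(x,r)\approx(y,r')$ if and only if either $(x,r)=(y,r')$ or $x=y\in\partial\Delta_{4,2}$.
   Context: The group $\mathbb{Z}_2^4=\{\pm1\}^4$ acts on $\mathbb{R}P^5$, with homogeneous coordinates $[x_{12}:x_{13}:x_{14}:x_{23}:x_{24}:x_{34}]$, by $x_{ij}\mapsto\epsilon_i\epsilon_jx_{ij}$, i.e. via the second symmetric power $\mathbb{Z}_2^4\to\mathbb{Z}_2^6$, $(\epsilon_1,\dots,\epsilon_4)\mapsto(\epsilon_1\epsilon_2,\epsilon_1\epsilon_3,\epsilon_1\epsilon_4,\epsilon_2\epsilon_3,\epsilon_2\epsilon_4,\epsilon_3\epsilon_4)$, composed with the canonical coordinatewise action of $\mathbb{Z}_2^6$ on $\mathbb{R}P^5$. $\Delta_{4,2}\subset\mathbb{R}^4$ is the convex hull of the six points $\delta_{ij}$ ($1\le i<j\le4$) with entries $1$ in positions $i,j$ and $0$ elsewhere, and $\partial\Delta_{4,2}$ is its boundary. *)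

theory Defs
  imports "HOL-Analysis.Analysis"
begin

definition quot_top :: "'a topology \<Rightarrow> ('a \<Rightarrow> 'b) \<Rightarrow> 'b topology" where
  "quot_top X f = topology (\<lambda>U. U \<subseteq> f ` topspace X \<and> openin X {x \<in> topspace X. f x \<in> U})"

lemma istopology_quot_top:
  "istopology (\<lambda>U. U \<subseteq> f ` topspace X \<and> openin X {x \<in> topspace X. f x \<in> U})"
proof -
  have i: "{x \<in> topspace X. f x \<in> S \<inter> T} = {x \<in> topspace X. f x \<in> S} \<inter> {x \<in> topspace X. f x \<in> T}" for S T
    by auto
  have u: "{x \<in> topspace X. f x \<in> \<Union>K} = \<Union>((\<lambda>S. {x \<in> topspace X. f x \<in> S}) ` K)" for K
    by auto
  show ?thesis
    unfolding istopology_def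
    by (auto simp only: i u intro!: openin_Int openin_Union)
qed

definition quotient_space :: "'a topology \<Rightarrow> ('a \<Rightarrow> 'a \<Rightarrow> bool) \<Rightarrow> 'a set topology" where
  "quotient_space X R = quot_top X (\<lambda>x. {y \<in> topspace X. R x y})"

definition proj_space :: "(real ^ 'n) set topology" where
  "proj_space = quotient_space (top_of_set (UNIV - {0}))
      (\<lambda>x y. \<exists>c::real. c \<noteq> 0 \<and> y = c *\<^sub>R x)"

abbreviation RP5 :: "(real ^ 6) set topology" where "RP5 \<equiv> proj_space"
abbreviation RP2 :: "(real ^ 3) set topology" where "RP2 \<equiv> proj_space"

text \<open>Coordinates of real^6 are (x12, x13, x14, x23, x24, x34) in this order.\<close>
definition Z2_4 :: "(real ^ 4) set" where
  "Z2_4 = {e. \<forall>i. e $ i = 1 \<or> e $ i = -1}"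

definition sym2_act :: "real ^ 4 \<Rightarrow> real ^ 6 \<Rightarrow> real ^ 6" where
  "sym2_act e x = vector
     [e$1 * e$2 * x$1, e$1 * e$3 * x$2, e$1 * e$4 * x$3,
      e$2 * e$3 * x$4, e$2 * e$4 * x$5, e$3 * e$4 * x$6]"

definition RP5_act :: "real ^ 4 \<Rightarrow> (real ^ 6) set \<Rightarrow> (real ^ 6) set" where
  "RP5_act e P = sym2_act e ` P"

definition RP5_orbit_space :: "(real ^ 6) set set topology" where
  "RP5_orbit_space = quotient_space RP5 (\<lambda>P Q. \<exists>e \<in> Z2_4. Q = RP5_act e P)"

definition Delta42 :: "(real ^ 4) set" where
  "Delta42 = convex hull {vector [1,1,0,0], vector [1,0,1,0], vector [1,0,0,1],
                          vector [0,1,1,0], vector [0,1,0,1], vector [0,0,1,1]}"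

definition glued_space :: "((real ^ 4) \<times> (real ^ 3) set) set topology" where
  "glued_space = quotient_space (prod_topology (top_of_set Delta42) RP2)
     (\<lambda>p q. p = q \<or> (fst p = fst q \<and> fst p \<in> rel_frontier Delta42))"

end

theory Submission
  imports Defs
begin

(* The Z_2^4-invariants of x in R^6 - 0 are the differences of squares
   D = (x12^2 - x34^2, x13^2 - x24^2, x14^2 - x23^2) and the products
   P = (x12 x34, x13 x24, x14 x23) up to a common sign, since every e acts on P
   by e1 e2 e3 e4; conversely equal invariants force the orbits to agree.
   Normalising x so that |D|_1 + |P| = 1, the orbit of [x] is thus recorded by the point D of
   the octahedron {|D|_1 <= 1}, an affine copy of Delta_{4,2}, together with the line through
   P, a point of RP^2, which is lost exactly when P = 0, i.e. over the boundary |D|_1 = 1.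
   Encoding the line by the Veronese matrix P P^T, both the orbit space and the glued space
   map continuously onto the same subset of R^{3x3} x R^3 with fibres exactly their
   identifications; being compact quotients, both are homeomorphic to this image. *)

section \<open>Quotients of compact spaces\<close>

lemma openin_quot_top:
  "openin (quot_top X f) U \<longleftrightarrow> U \<subseteq> f ` topspace X \<and> openin X {x \<in> topspace X. f x \<in> U}"
  unfolding quot_top_def by (simp add: istopology_quot_top[of f X])

lemma topspace_quot_top: "topspace (quot_top X f) = f ` topspace X"
proof -
  have "{x \<in> topspace X. f x \<in> f ` topspace X} = topspace X" by auto
  then have "openin (quot_top X f) (f ` topspace X)"
    unfolding openin_quot_top by simp
  then have "f ` topspace X \<subseteq> topspace (quot_top X f)" by (rule openin_subset)
  moreover have "topspace (quot_top X f) \<subseteq> f ` topspace X"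
    using openin_quot_top[of X f "topspace (quot_top X f)"] by simp
  ultimately show ?thesis by blast
qed

lemma quotient_map_quot_top: "quotient_map X (quot_top X f) f"
  unfolding quotient_map_def topspace_quot_top openin_quot_top by blast

lemma quotient_space_homeomorphic_image:
  assumes f: "continuous_map X Y f" and "compact_space X" and "Hausdorff_space Y"
    and R: "\<And>x y. x \<in> topspace X \<Longrightarrow> y \<in> topspace X \<Longrightarrow> R x y \<longleftrightarrow> f x = f y"
  shows "quotient_space X R homeomorphic_space subtopology Y (f ` topspace X)"
proof -
  define q where "q = (\<lambda>x. {y \<in> topspace X. R x y})"
  have qm: "quotient_map X (quotient_space X R) q"
    unfolding quotient_space_def q_def by (rule quotient_map_quot_top)
  have fm: "quotient_map X (subtopology Y (f ` topspace X)) f"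
  proof (rule continuous_imp_quotient_map)
    show "continuous_map X (subtopology Y (f ` topspace X)) f"
      using f by (simp add: continuous_map_in_subtopology)
    show "f ` topspace X = topspace (subtopology Y (f ` topspace X))"
      using f by (auto simp: continuous_map_def)
  qed (use assms Hausdorff_space_subtopology in auto)
  have q_eq_iff: "q x = q y \<longleftrightarrow> f x = f y" if "x \<in> topspace X" "y \<in> topspace X" for x y
  proof
    assume "q x = q y"
    then have "R y x" using R[of x x] that by (auto simp: q_def)
    then show "f x = f y" using R that by simp
  next
    assume "f x = f y"
    then show "q x = q y" using R that unfolding q_def by auto
  qed
  have f_eq: "f x = f y" if "x \<in> topspace X" "y \<in> topspace X" "q x = q y" for x y
    using q_eq_iff that by blast
  have q_eq: "q x = q y" if "x \<in> topspace X" "y \<in> topspace X" "f x = f y" for x y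
    using q_eq_iff that by blast
  obtain g where g: "continuous_map (quotient_space X R) (subtopology Y (f ` topspace X)) g"
     "g ` topspace (quotient_space X R) = f ` topspace X"
     "\<And>x. x \<in> topspace X \<Longrightarrow> g (q x) = f x"
    using quotient_map_lift_exists[OF qm quotient_imp_continuous_map[OF fm] f_eq] by blast
  obtain k where k: "continuous_map (subtopology Y (f ` topspace X)) (quotient_space X R) k"
     "k ` topspace (subtopology Y (f ` topspace X)) = q ` topspace X"
     "\<And>x. x \<in> topspace X \<Longrightarrow> k (f x) = q x"
    using quotient_map_lift_exists[OF fm quotient_imp_continuous_map[OF qm] q_eq] by blast
  have tq: "topspace (quotient_space X R) = q ` topspace X"
    and tf: "topspace (subtopology Y (f ` topspace X)) = f ` topspace X"
    using qm fm quotient_imp_surjective_map by blast+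
  have "homeomorphic_maps (quotient_space X R) (subtopology Y (f ` topspace X)) g k"
    unfolding homeomorphic_maps_def
    using g(1,3) k(1,3) tq tf by auto
  then show ?thesis unfolding homeomorphic_space_def by blast
qed

section \<open>Real projective spaces\<close>

definition proj_class :: "real^'n \<Rightarrow> (real^'n) set" where
  "proj_class x = {y. y \<noteq> 0 \<and> (\<exists>c. c \<noteq> 0 \<and> y = c *\<^sub>R x)}"

lemma quotient_map_proj_class: "quotient_map (top_of_set (UNIV - {0})) proj_space proj_class"
proof -
  have eq: "(\<lambda>x. {y \<in> topspace (top_of_set (UNIV - {0})). \<exists>c. c \<noteq> 0 \<and> y = c *\<^sub>R x}) = proj_class"
    by (auto simp: proj_class_def)
  show ?thesis
    unfolding proj_space_def quotient_space_def eq by (rule quotient_map_quot_top)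
qed

lemma topspace_proj_space: "topspace proj_space = proj_class ` (UNIV - {0})"
  by (metis quotient_map_proj_class quotient_imp_surjective_map topspace_euclidean_subtopology)

lemma proj_class_eq_iff:
  assumes "x \<noteq> 0" "y \<noteq> 0"
  shows "proj_class x = proj_class y \<longleftrightarrow> (\<exists>c. c \<noteq> 0 \<and> y = c *\<^sub>R x)"
proof
  assume "proj_class x = proj_class y"
  moreover have "y \<in> proj_class y" using assms by (auto simp: proj_class_def intro!: exI[of _ 1])
  ultimately show "\<exists>c. c \<noteq> 0 \<and> y = c *\<^sub>R x" by (auto simp: proj_class_def)
next
  assume "\<exists>c. c \<noteq> 0 \<and> y = c *\<^sub>R x"
  then obtain c where c: "c \<noteq> 0" "y = c *\<^sub>R x" by blast
  have "(\<exists>d. d \<noteq> 0 \<and> z = d *\<^sub>R x) \<longleftrightarrow> (\<exists>d. d \<noteq> 0 \<and> z = d *\<^sub>R y)" for z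
  proof
    assume "\<exists>d. d \<noteq> 0 \<and> z = d *\<^sub>R x"
    then obtain d where "d \<noteq> 0" "z = d *\<^sub>R x" by blast
    then show "\<exists>d. d \<noteq> 0 \<and> z = d *\<^sub>R y" using c by (intro exI[of _ "d / c"]) auto
  next
    assume "\<exists>d. d \<noteq> 0 \<and> z = d *\<^sub>R y"
    then obtain d where "d \<noteq> 0" "z = d *\<^sub>R y" by blast
    then show "\<exists>d. d \<noteq> 0 \<and> z = d *\<^sub>R x" using c by (intro exI[of _ "d * c"]) auto
  qed
  then show "proj_class x = proj_class y" by (simp add: proj_class_def)
qed

lemma compact_space_proj_space: "compact_space (proj_space :: (real^'n) set topology)"
proof -
  have "proj_class ` (UNIV - {0}) = proj_class ` sphere (0::real^'n) 1"
  proof (intro subset_antisym image_subsetI)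
    fix x :: "real^'n" assume "x \<in> UNIV - {0}"
    then have "proj_class x = proj_class (sgn x)" "sgn x \<in> sphere 0 1"
      by (auto simp: proj_class_eq_iff norm_sgn sgn_div_norm intro!: exI[of _ "1 / norm x"])
    then show "proj_class x \<in> proj_class ` sphere 0 1" by blast
  qed auto
  moreover have "compactin proj_space (proj_class ` sphere (0::real^'n) 1)"
    by (rule image_compactin[OF _ quotient_imp_continuous_map[OF quotient_map_proj_class]])
       (auto simp: compactin_subtopology)
  ultimately show ?thesis unfolding compact_space_def topspace_proj_space by simp
qed

lemma proj_space_lift:
  fixes \<phi> :: "real^'n \<Rightarrow> 'b::topological_space"
  assumes "continuous_on (UNIV - {0}) \<phi>" and "\<And>x c. x \<noteq> 0 \<Longrightarrow> c \<noteq> 0 \<Longrightarrow> \<phi> (c *\<^sub>R x) = \<phi> x"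
  obtains F where "continuous_map proj_space euclidean F" "\<And>x. x \<noteq> 0 \<Longrightarrow> F (proj_class x) = \<phi> x"
proof -
  have "continuous_map (top_of_set (UNIV - {0})) euclidean \<phi>"
    using assms(1) by (simp add: continuous_map_iff_continuous)
  moreover have "\<phi> x = \<phi> y" if xy: "x \<in> topspace (top_of_set (UNIV - {0}))"
    "y \<in> topspace (top_of_set (UNIV - {0}))" "proj_class x = proj_class y" for x y
  proof -
    obtain c where "c \<noteq> 0" "y = c *\<^sub>R x" using xy proj_class_eq_iff[of x y] by auto
    then show ?thesis using xy assms(2) by simp
  qed
  ultimately obtain F where "continuous_map proj_space euclidean F"
    "\<And>x. x \<in> topspace (top_of_set (UNIV - {0})) \<Longrightarrow> F (proj_class x) = \<phi> x"
    using quotient_map_lift_exists[OF quotient_map_proj_class] by metis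
  then show ?thesis using that by simp
qed

section \<open>The Veronese map\<close>

definition veronese :: "real^'n \<Rightarrow> real^'n^'n" where
  "veronese v = (\<chi> i j. v$i * v$j)"

lemma veronese_scale: "veronese (c *\<^sub>R v) = c\<^sup>2 *\<^sub>R veronese v"
  unfolding veronese_def vec_eq_iff by (simp add: power2_eq_square ac_simps)

lemma continuous_on_veronese [continuous_intros]:
  "continuous_on S f \<Longrightarrow> continuous_on S (\<lambda>x. veronese (f x))"
  unfolding veronese_def by (intro continuous_intros)

lemma veronese_eq_imp_sign:
  fixes v w :: "real^'n"
  assumes "veronese v = veronese w"
  shows "\<exists>d. d * d = 1 \<and> w = d *\<^sub>R v"
proof -
  have vw: "v$i * v$j = w$i * w$j" for i j
    using assms unfolding veronese_def vec_eq_iff by simp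
  show ?thesis
  proof (cases "v = 0")
    case True
    then have "w$i * w$i = 0" for i using vw[of i i] by simp
    then have "w = 0" by (simp add: vec_eq_iff)
    with True show ?thesis by (intro exI[of _ 1]) simp
  next
    case False
    then have N: "v \<bullet> v > 0" by simp
    have row: "w$i * (v \<bullet> v) = v$i * (v \<bullet> w)" for i
    proof -
      have "w$i * (v \<bullet> v) = (\<Sum>j\<in>UNIV. w$i * (w$j * w$j))"
        by (simp add: inner_vec_def sum_distrib_left vw)
      also have "\<dots> = (\<Sum>j\<in>UNIV. v$i * (v$j * w$j))"
        by (simp add: vw mult.assoc[symmetric])
      also have "\<dots> = v$i * (v \<bullet> w)"
        by (simp add: inner_vec_def sum_distrib_left)
      finally show ?thesis .
    qed
    have "(v \<bullet> w) * (v \<bullet> w) = (\<Sum>i\<in>UNIV. \<Sum>j\<in>UNIV. (v$i * v$j) * (w$i * w$j))"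
      by (simp add: inner_vec_def sum_product ac_simps)
    also have "\<dots> = (v \<bullet> v) * (v \<bullet> v)"
      by (simp add: inner_vec_def sum_product vw ac_simps)
    finally have sq: "(v \<bullet> w) * (v \<bullet> w) = (v \<bullet> v) * (v \<bullet> v)" .
    define d where "d = (v \<bullet> w) / (v \<bullet> v)"
    have "d * d = 1" using sq N by (simp add: d_def field_simps)
    moreover have "w = d *\<^sub>R v"
      using row N by (simp add: vec_eq_iff d_def field_simps)
    ultimately show ?thesis by blast
  qed
qed

lemma veronese_sgn_scale: "c \<noteq> 0 \<Longrightarrow> veronese (sgn (c *\<^sub>R s)) = veronese (sgn s)"
  by (simp add: sgn_scaleR veronese_scale power2_eq_square sgn_mult[symmetric] sgn_zero_iff)

lemma veronese_sgn_eq_imp_scale: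
  assumes "s \<noteq> 0" "t \<noteq> 0" "veronese (sgn s) = veronese (sgn t)"
  shows "\<exists>c. c \<noteq> 0 \<and> t = c *\<^sub>R s"
proof -
  obtain d where d: "d * d = 1" "sgn t = d *\<^sub>R sgn s"
    using veronese_eq_imp_sign[OF assms(3)] by blast
  have "t = norm t *\<^sub>R sgn t"
    using assms by (simp add: sgn_div_norm)
  also have "\<dots> = (norm t * d / norm s) *\<^sub>R s"
    by (simp only: d(2)) (simp add: sgn_div_norm divide_inverse ac_simps)
  finally have "t = (norm t * d / norm s) *\<^sub>R s" .
  moreover have "norm t * d / norm s \<noteq> 0" using assms d by auto
  ultimately show ?thesis by blast
qed

section \<open>Invariants of the \<open>Z\<^sub>2\<^sup>4\<close> action\<close>

lemma exhaust_6:
  fixes i :: 6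
  shows "i = 1 \<or> i = 2 \<or> i = 3 \<or> i = 4 \<or> i = 5 \<or> i = 6"
proof (induct i)
  case (of_int z)
  then have "z = 0 \<or> z = 1 \<or> z = 2 \<or> z = 3 \<or> z = 4 \<or> z = 5" by fastforce
  then show ?case by auto
qed

lemma forall_6: "(\<forall>i::6. P i) \<longleftrightarrow> P 1 \<and> P 2 \<and> P 3 \<and> P 4 \<and> P 5 \<and> P 6"
  by (metis exhaust_6)

lemma vector_4 [simp]:
  "(vector [a, b, c, d] :: 'a::zero^4) $ 1 = a"
  "(vector [a, b, c, d] :: 'a^4) $ 2 = b"
  "(vector [a, b, c, d] :: 'a^4) $ 3 = c"
  "(vector [a, b, c, d] :: 'a^4) $ 4 = d"
  unfolding vector_def by simp_all

lemma vector_6 [simp]: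
  "(vector [a, b, c, d, e, f] :: 'a::zero^6) $ 1 = a"
  "(vector [a, b, c, d, e, f] :: 'a^6) $ 2 = b"
  "(vector [a, b, c, d, e, f] :: 'a^6) $ 3 = c"
  "(vector [a, b, c, d, e, f] :: 'a^6) $ 4 = d"
  "(vector [a, b, c, d, e, f] :: 'a^6) $ 5 = e"
  "(vector [a, b, c, d, e, f] :: 'a^6) $ 6 = f"
  unfolding vector_def by simp_all

lemma Z2_4_square: "e \<in> Z2_4 \<Longrightarrow> (e$i)\<^sup>2 = 1"
  unfolding Z2_4_def by (cases "e$i = 1") auto

lemma sym2_act_scale: "sym2_act e (k *\<^sub>R x) = k *\<^sub>R sym2_act e x"
  unfolding sym2_act_def vec_eq_iff forall_6 by (simp add: ac_simps)

lemma sym2_act_zero: "sym2_act e 0 = 0"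
  unfolding sym2_act_def vec_eq_iff forall_6 by simp

lemma sym2_act_involution: "e \<in> Z2_4 \<Longrightarrow> sym2_act e (sym2_act e x) = x"
  unfolding sym2_act_def vec_eq_iff forall_6
  by (simp add: ac_simps power2_eq_square[symmetric] Z2_4_square)

lemma sym2_act_nonzero: "e \<in> Z2_4 \<Longrightarrow> x \<noteq> 0 \<Longrightarrow> sym2_act e x \<noteq> 0"
  by (metis sym2_act_involution sym2_act_zero)

lemma square_eq_imp_sign:
  fixes u x :: real
  assumes "u\<^sup>2 = x\<^sup>2"
  obtains s where "s * s = 1" "u = s * x"
  using assms by (metis power2_eq_iff mult_1 mult_minus1 mult_minus_right mult_1_right)

lemma pair_eq_up_to_signs:
  fixes u v x y d :: real
  assumes diff: "u\<^sup>2 - v\<^sup>2 = x\<^sup>2 - y\<^sup>2" and prod: "u * v = d * (x * y)" and d: "d * d = 1"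
  shows "\<exists>s t. s * s = 1 \<and> t * t = 1 \<and> s * t = d \<and> u = s * x \<and> v = t * y"
proof -
  have uv: "(u * v)\<^sup>2 = (x * y)\<^sup>2"
    using d by (simp add: prod power_mult_distrib power2_eq_square)
  have "(u\<^sup>2 + v\<^sup>2)\<^sup>2 = (u\<^sup>2 - v\<^sup>2)\<^sup>2 + 4 * (u * v)\<^sup>2"
    by (simp add: algebra_simps power2_eq_square)
  also have "\<dots> = (x\<^sup>2 + y\<^sup>2)\<^sup>2"
    unfolding diff uv by (simp add: algebra_simps power2_eq_square)
  finally have "u\<^sup>2 + v\<^sup>2 = x\<^sup>2 + y\<^sup>2"
    by (simp add: power2_eq_iff_nonneg)
  then have "u\<^sup>2 = x\<^sup>2" "v\<^sup>2 = y\<^sup>2" using diff by linarith+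
  then obtain s t where st: "s * s = 1" "u = s * x" "t * t = 1" "v = t * y"
    by (metis square_eq_imp_sign)
  consider "x * y \<noteq> 0" | "x = 0" | "y = 0" by auto
  then show ?thesis
  proof cases
    case 1
    then have "s * t = d" using prod st by (simp add: algebra_simps)
    with st show ?thesis by blast
  next
    case 2
    then show ?thesis using st d by (intro exI[of _ "d * t"] exI[of _ t]) (simp add: algebra_simps)
  next
    case 3
    then show ?thesis using st d by (intro exI[of _ s] exI[of _ "d * s"]) (simp add: algebra_simps)
  qed
qed

lemma sign_pattern_in_orbit:
  fixes s1 s2 s3 s4 s5 s6 :: real
  assumes "s1 * s1 = 1" "s2 * s2 = 1" "s3 * s3 = 1" "s4 * s4 = 1" "s5 * s5 = 1" "s6 * s6 = 1"
    and "s1 * s6 = s2 * s5" "s3 * s4 = s2 * s5"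
  shows "\<exists>e\<in>Z2_4. \<exists>c. c \<noteq> 0 \<and>
    (\<forall>x. vector [s1 * x$1, s2 * x$2, s3 * x$3, s4 * x$4, s5 * x$5, s6 * x$6] = c *\<^sub>R sym2_act e x)"
proof -
  have pm: "s = 1 \<or> s = -1" if "s * s = 1" for s :: real
    using that by (metis minus_equation_iff mult_cancel_left1 square_eq_iff)
  note signs = pm[OF assms(1)] pm[OF assms(2)] pm[OF assms(3)] pm[OF assms(4)] pm[OF assms(5)]
    pm[OF assms(6)] assms(7,8)
  define c where "c = s1 * s2 * s4"
  define e1 e2 e3 e4 where "e1 = (1::real)" "e2 = c * s1" "e3 = c * s2" "e4 = c * s3"
  have c: "c = 1 \<or> c = -1" and e: "e2 = 1 \<or> e2 = -1" "e3 = 1 \<or> e3 = -1" "e4 = 1 \<or> e4 = -1"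
    using signs unfolding c_def e1_e2_e3_e4_def by auto
  have eZ: "vector [e1, e2, e3, e4] \<in> Z2_4"
    unfolding Z2_4_def forall_4 using e by (simp add: e1_e2_e3_e4_def)
  have "s1 = c * (e1 * e2)" "s2 = c * (e1 * e3)" "s3 = c * (e1 * e4)"
    "s4 = c * (e2 * e3)" "s5 = c * (e2 * e4)" "s6 = c * (e3 * e4)"
    using signs unfolding c_def e1_e2_e3_e4_def by auto
  then have act: "vector [s1 * x$1, s2 * x$2, s3 * x$3, s4 * x$4, s5 * x$5, s6 * x$6]
      = c *\<^sub>R sym2_act (vector [e1, e2, e3, e4]) x" for x
    unfolding vec_eq_iff forall_6 sym2_act_def by (simp add: ac_simps)
  have "c \<noteq> 0" using c by auto
  with eZ act show ?thesis by blast
qed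

definition l1_norm :: "real^'n \<Rightarrow> real" where
  "l1_norm v = (\<Sum>i\<in>UNIV. \<bar>v$i\<bar>)"

lemma l1_norm_nonneg: "l1_norm v \<ge> 0"
  unfolding l1_norm_def by (simp add: sum_nonneg)

lemma l1_norm_eq_0_iff: "l1_norm v = 0 \<longleftrightarrow> v = 0"
  unfolding l1_norm_def by (simp add: sum_nonneg_eq_0_iff vec_eq_iff)

lemma l1_norm_scale: "l1_norm (c *\<^sub>R v) = \<bar>c\<bar> * l1_norm v"
  unfolding l1_norm_def by (simp add: abs_mult sum_distrib_left)

lemma continuous_on_l1_norm [continuous_intros]:
  "continuous_on S f \<Longrightarrow> continuous_on S (\<lambda>x. l1_norm (f x))"
  unfolding l1_norm_def by (intro continuous_intros)

lemma continuous_on_vector_3 [continuous_intros]: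
  fixes f g h :: "'a::topological_space \<Rightarrow> real"
  assumes "continuous_on S f" "continuous_on S g" "continuous_on S h"
  shows "continuous_on S (\<lambda>x. vector [f x, g x, h x] :: real^3)"
proof -
  have "vector [a, b, c] = a *\<^sub>R axis 1 1 + b *\<^sub>R axis 2 1 + c *\<^sub>R axis (3::3) (1::real)" for a b c
    by (simp add: vec_eq_iff forall_3 axis_def)
  then show ?thesis by (simp only:) (intro continuous_intros assms)
qed

lemma l1_norm_3: "l1_norm (v :: real^3) = \<bar>v$1\<bar> + \<bar>v$2\<bar> + \<bar>v$3\<bar>"
  unfolding l1_norm_def sum_3 ..

(* Coordinates 1, ..., 6 of real^6 are x12, x13, x14, x23, x24, x34, so (1,6), (2,5), (3,4)
   are the complementary index pairs ij, kl; the action multiplies x_ij x_kl by e1 e2 e3 e4. *)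
definition pair_products :: "real^6 \<Rightarrow> real^3" where
  "pair_products x = vector [x$1 * x$6, x$2 * x$5, x$3 * x$4]"

definition pair_differences :: "real^6 \<Rightarrow> real^3" where
  "pair_differences x = vector [(x$1)\<^sup>2 - (x$6)\<^sup>2, (x$2)\<^sup>2 - (x$5)\<^sup>2, (x$3)\<^sup>2 - (x$4)\<^sup>2]"

definition orbit_weight :: "real^6 \<Rightarrow> real" where
  "orbit_weight x = l1_norm (pair_differences x) + norm (pair_products x)"

definition orbit_invariant :: "real^6 \<Rightarrow> (real^3^3) \<times> (real^3)" where
  "orbit_invariant x =
     (veronese ((1 / orbit_weight x) *\<^sub>R pair_products x), (1 / orbit_weight x) *\<^sub>R pair_differences x)"

lemma pair_products_scale: "pair_products (k *\<^sub>R x) = k\<^sup>2 *\<^sub>R pair_products x"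
  unfolding pair_products_def vec_eq_iff forall_3 by (simp add: power2_eq_square ac_simps)

lemma pair_differences_scale: "pair_differences (k *\<^sub>R x) = k\<^sup>2 *\<^sub>R pair_differences x"
  unfolding pair_differences_def vec_eq_iff forall_3 by (simp add: power_mult_distrib algebra_simps)

lemma pair_products_sym2_act:
  "pair_products (sym2_act e x) = (e$1 * e$2 * e$3 * e$4) *\<^sub>R pair_products x"
  unfolding pair_products_def sym2_act_def vec_eq_iff forall_3 by (simp add: ac_simps)

lemma pair_differences_sym2_act:
  "e \<in> Z2_4 \<Longrightarrow> pair_differences (sym2_act e x) = pair_differences x"
  unfolding pair_differences_def sym2_act_def by (simp add: power_mult_distrib Z2_4_square)

lemma product_and_difference_of_squares: "\<exists>a b :: real. a * b = q \<and> a\<^sup>2 - b\<^sup>2 = w"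
proof -
  define r where "r = sqrt (w\<^sup>2 + 4 * q\<^sup>2)"
  have r: "r \<ge> \<bar>w\<bar>" "r\<^sup>2 = w\<^sup>2 + 4 * q\<^sup>2" unfolding r_def by (simp_all add: real_le_rsqrt)
  define a where "a = sqrt ((r + w) / 2)"
  define b where "b = (if q \<ge> 0 then 1 else -1) * sqrt ((r - w) / 2)"
  have "a * b = (if q \<ge> 0 then 1 else -1) * sqrt (((r + w) / 2) * ((r - w) / 2))"
    unfolding a_def b_def by (simp only: real_sqrt_mult mult.left_commute)
  also have "((r + w) / 2) * ((r - w) / 2) = q\<^sup>2"
    using r by (simp add: field_simps power2_eq_square)
  finally have "a * b = q" by simp
  moreover have "a\<^sup>2 - b\<^sup>2 = w"
    using r by (simp add: a_def b_def power_mult_distrib field_simps)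
  ultimately show ?thesis by blast
qed

lemma pair_products_differences_surj: "\<exists>x. pair_products x = P \<and> pair_differences x = D"
proof -
  obtain a1 b1 a2 b2 a3 b3 where
    "a1 * b1 = P$1" "a1\<^sup>2 - b1\<^sup>2 = D$1" "a2 * b2 = P$2" "a2\<^sup>2 - b2\<^sup>2 = D$2"
    "a3 * b3 = P$3" "a3\<^sup>2 - b3\<^sup>2 = D$3"
    by (metis product_and_difference_of_squares)
  then have "pair_products (vector [a1, a2, a3, b3, b2, b1]) = P"
    "pair_differences (vector [a1, a2, a3, b3, b2, b1]) = D"
    by (simp_all add: pair_products_def pair_differences_def vec_eq_iff forall_3)
  then show ?thesis by blast
qed

lemma pair_invariants_determine_orbit:
  assumes d: "d * d = 1" and P: "pair_products y = d *\<^sub>R pair_products x"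
    and D: "pair_differences y = pair_differences x"
  shows "\<exists>e\<in>Z2_4. \<exists>c. c \<noteq> 0 \<and> y = c *\<^sub>R sym2_act e x"
proof -
  have prods: "y$1 * y$6 = d * (x$1 * x$6)" "y$2 * y$5 = d * (x$2 * x$5)"
    "y$3 * y$4 = d * (x$3 * x$4)"
    using P by (simp_all add: pair_products_def vec_eq_iff forall_3)
  have sq: "(y$1)\<^sup>2 - (y$6)\<^sup>2 = (x$1)\<^sup>2 - (x$6)\<^sup>2" "(y$2)\<^sup>2 - (y$5)\<^sup>2 = (x$2)\<^sup>2 - (x$5)\<^sup>2"
    "(y$3)\<^sup>2 - (y$4)\<^sup>2 = (x$3)\<^sup>2 - (x$4)\<^sup>2"
    using D by (simp_all add: pair_differences_def vec_eq_iff forall_3)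
  obtain s1 s6 where "s1 * s1 = 1" "s6 * s6 = 1" "s1 * s6 = d" "y$1 = s1 * x$1" "y$6 = s6 * x$6"
    using pair_eq_up_to_signs[OF sq(1) prods(1) d] by blast
  moreover obtain s2 s5 where "s2 * s2 = 1" "s5 * s5 = 1" "s2 * s5 = d" "y$2 = s2 * x$2" "y$5 = s5 * x$5"
    using pair_eq_up_to_signs[OF sq(2) prods(2) d] by blast
  moreover obtain s3 s4 where "s3 * s3 = 1" "s4 * s4 = 1" "s3 * s4 = d" "y$3 = s3 * x$3" "y$4 = s4 * x$4"
    using pair_eq_up_to_signs[OF sq(3) prods(3) d] by blast
  ultimately show ?thesis
    using sign_pattern_in_orbit[of s1 s2 s3 s4 s5 s6] by (auto simp: vec_eq_iff forall_6)
qed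

lemma orbit_weight_scale: "orbit_weight (k *\<^sub>R x) = k\<^sup>2 * orbit_weight x"
  unfolding orbit_weight_def pair_products_scale pair_differences_scale l1_norm_scale
  by (simp add: algebra_simps)

lemma orbit_weight_pos:
  assumes "x \<noteq> 0"
  shows "orbit_weight x > 0"
proof (rule ccontr)
  assume "\<not> orbit_weight x > 0"
  then have "l1_norm (pair_differences x) = 0" "norm (pair_products x) = 0"
    using l1_norm_nonneg[of "pair_differences x"] norm_ge_zero[of "pair_products x"]
    unfolding orbit_weight_def by linarith+
  then have "pair_differences x = 0" "pair_products x = 0"
    by (simp_all add: l1_norm_eq_0_iff)
  then have "(x$1)\<^sup>2 = (x$6)\<^sup>2 \<and> x$1 * x$6 = 0" "(x$2)\<^sup>2 = (x$5)\<^sup>2 \<and> x$2 * x$5 = 0"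
    "(x$3)\<^sup>2 = (x$4)\<^sup>2 \<and> x$3 * x$4 = 0"
    unfolding pair_differences_def pair_products_def vec_eq_iff forall_3 by simp_all
  then have "x = 0" unfolding vec_eq_iff forall_6 by auto
  with assms show False by simp
qed

lemma orbit_invariant_scale:
  assumes "k \<noteq> 0"
  shows "orbit_invariant (k *\<^sub>R x) = orbit_invariant x"
proof -
  have "1 / (k\<^sup>2 * orbit_weight x) * k\<^sup>2 = 1 / orbit_weight x" using assms by simp
  then show ?thesis
    unfolding orbit_invariant_def orbit_weight_scale pair_products_scale pair_differences_scale
    by simp
qed

lemma orbit_invariant_sym2_act:
  assumes "e \<in> Z2_4"
  shows "orbit_invariant (sym2_act e x) = orbit_invariant x"
proof -
  define \<sigma> where "\<sigma> = e$1 * e$2 * e$3 * e$4"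
  have \<sigma>: "\<sigma>\<^sup>2 = 1"
    using assms by (simp add: \<sigma>_def power_mult_distrib Z2_4_square)
  then have "\<bar>\<sigma>\<bar> = 1" by (simp add: abs_square_eq_1)
  then have "orbit_weight (sym2_act e x) = orbit_weight x"
    unfolding orbit_weight_def pair_products_sym2_act pair_differences_sym2_act[OF assms] \<sigma>_def[symmetric]
    by simp
  then show ?thesis
    unfolding orbit_invariant_def pair_products_sym2_act pair_differences_sym2_act[OF assms] \<sigma>_def[symmetric]
    using \<sigma> by (simp add: veronese_scale power_divide)
qed

lemma orbit_invariant_eq_iff:
  assumes x: "x \<noteq> 0" and y: "y \<noteq> 0"
  shows "orbit_invariant x = orbit_invariant y \<longleftrightarrow> (\<exists>e\<in>Z2_4. \<exists>c. c \<noteq> 0 \<and> y = c *\<^sub>R sym2_act e x)"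
proof
  assume "\<exists>e\<in>Z2_4. \<exists>c. c \<noteq> 0 \<and> y = c *\<^sub>R sym2_act e x"
  then show "orbit_invariant x = orbit_invariant y"
    by (auto simp: orbit_invariant_scale orbit_invariant_sym2_act)
next
  assume eq: "orbit_invariant x = orbit_invariant y"
  define m where "m = orbit_weight y"
  have m: "m > 0" "orbit_weight x > 0" using orbit_weight_pos x y by (auto simp: m_def)
  define r where "r = sqrt (m / orbit_weight x)"
  have r: "r \<noteq> 0" "r\<^sup>2 = m / orbit_weight x" using m by (simp_all add: r_def)
  have "orbit_weight (r *\<^sub>R x) = m" using m r by (simp add: orbit_weight_scale)
  moreover have "orbit_invariant (r *\<^sub>R x) = orbit_invariant y"
    using eq r by (simp add: orbit_invariant_scale)
  ultimately have "veronese (pair_products (r *\<^sub>R x)) = veronese (pair_products y)"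
    and diffs: "pair_differences y = pair_differences (r *\<^sub>R x)"
    using m by (simp_all add: orbit_invariant_def m_def veronese_scale)
  then obtain d where "d * d = 1" "pair_products y = d *\<^sub>R pair_products (r *\<^sub>R x)"
    using veronese_eq_imp_sign by blast
  then obtain e c where "e \<in> Z2_4" "c \<noteq> 0" "y = c *\<^sub>R sym2_act e (r *\<^sub>R x)"
    using pair_invariants_determine_orbit diffs by blast
  then show "\<exists>e\<in>Z2_4. \<exists>c. c \<noteq> 0 \<and> y = c *\<^sub>R sym2_act e x"
    using r by (intro bexI[of _ e] exI[of _ "c * r"]) (auto simp: sym2_act_scale)
qed

lemma continuous_on_orbit_invariant: "continuous_on (UNIV - {0}) orbit_invariant"
proof -
  have "continuous_on (UNIV - {0}) orbit_weight"
    unfolding orbit_weight_def[abs_def] pair_products_def pair_differences_def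
    by (intro continuous_intros)
  then show ?thesis
    unfolding orbit_invariant_def[abs_def] pair_products_def pair_differences_def
    by (intro continuous_intros) (auto dest: orbit_weight_pos)
qed

lemma RP5_act_proj_class:
  assumes "e \<in> Z2_4"
  shows "RP5_act e (proj_class x) = proj_class (sym2_act e x)"
proof
  show "RP5_act e (proj_class x) \<subseteq> proj_class (sym2_act e x)"
    using sym2_act_nonzero[OF assms] by (auto simp: RP5_act_def proj_class_def sym2_act_scale)
next
  show "proj_class (sym2_act e x) \<subseteq> RP5_act e (proj_class x)"
  proof
    fix z assume "z \<in> proj_class (sym2_act e x)"
    then obtain c where c: "z \<noteq> 0" "c \<noteq> 0" "z = c *\<^sub>R sym2_act e x"
      unfolding proj_class_def by auto
    then have "z = sym2_act e (c *\<^sub>R x)" "c *\<^sub>R x \<in> proj_class x"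
      using sym2_act_zero by (auto simp: sym2_act_scale proj_class_def)
    then show "z \<in> RP5_act e (proj_class x)" unfolding RP5_act_def by blast
  qed
qed

lemma RP5_orbit_space_homeomorphic:
  "RP5_orbit_space homeomorphic_space top_of_set (orbit_invariant ` (UNIV - {0}))"
proof -
  obtain F where F: "continuous_map RP5 euclidean F"
    and F_class: "\<And>x. x \<noteq> 0 \<Longrightarrow> F (proj_class x) = orbit_invariant x"
    using proj_space_lift[OF continuous_on_orbit_invariant orbit_invariant_scale] by metis
  have "F ` topspace RP5 = orbit_invariant ` (UNIV - {0})"
    unfolding topspace_proj_space image_image using F_class by simp
  moreover have "RP5_orbit_space homeomorphic_space subtopology euclidean (F ` topspace RP5)"
    unfolding RP5_orbit_space_def
  proof (rule quotient_space_homeomorphic_image[OF F compact_space_proj_space Hausdorff_space_euclidean])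
    fix P Q assume "P \<in> topspace RP5" "Q \<in> topspace RP5"
    then obtain x y :: "real^6" where xy: "x \<noteq> 0" "y \<noteq> 0" "P = proj_class x" "Q = proj_class y"
      unfolding topspace_proj_space by auto
    have "Q = RP5_act e P \<longleftrightarrow> (\<exists>c. c \<noteq> 0 \<and> y = c *\<^sub>R sym2_act e x)" if "e \<in> Z2_4" for e
      unfolding xy RP5_act_proj_class[OF that]
      using proj_class_eq_iff[OF sym2_act_nonzero[OF that xy(1)] xy(2)] by metis
    then show "(\<exists>e\<in>Z2_4. Q = RP5_act e P) \<longleftrightarrow> F P = F Q"
      using orbit_invariant_eq_iff[OF xy(1,2)] F_class xy by auto
  qed
  ultimately show ?thesis by simp
qed

section \<open>The hypersimplex as an octahedron\<close>

definition octahedron :: "(real^3) set" where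
  "octahedron = {v. l1_norm v \<le> 1}"

definition octahedron_vertices :: "(real^3) set" where
  "octahedron_vertices = {axis 1 1, axis 2 1, axis 3 1, - axis 3 1, - axis 2 1, - axis 1 1}"

lemma convex_octahedron: "convex octahedron"
proof (rule convexI)
  fix x y :: "real^3" and u v :: real
  assume "x \<in> octahedron" "y \<in> octahedron" "0 \<le> u" "0 \<le> v" "u + v = 1"
  then have "l1_norm (u *\<^sub>R x + v *\<^sub>R y) \<le> u * l1_norm x + v * l1_norm y"
    unfolding l1_norm_def
    by (auto simp: sum_distrib_left sum.distrib[symmetric] abs_mult
        intro!: sum_mono abs_triangle_ineq[THEN order_trans])
  also have "\<dots> \<le> u + v"
    using \<open>x \<in> octahedron\<close> \<open>y \<in> octahedron\<close> \<open>0 \<le> u\<close> \<open>0 \<le> v\<close>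
    by (intro add_mono mult_left_le) (auto simp: octahedron_def)
  finally show "u *\<^sub>R x + v *\<^sub>R y \<in> octahedron"
    using \<open>u + v = 1\<close> by (simp add: octahedron_def)
qed

lemma octahedron_eq_convex_hull: "octahedron = convex hull octahedron_vertices"
proof
  show "convex hull octahedron_vertices \<subseteq> octahedron"
    using convex_octahedron
    by (intro hull_minimal) (auto simp: octahedron_vertices_def octahedron_def l1_norm_3 axis_def)
next
  let ?H = "convex hull octahedron_vertices"
  have signed_axis: "(if t \<ge> 0 then 1 else -1) *\<^sub>R axis i 1 \<in> ?H" for t :: real and i :: 3
    using exhaust_3[of i] by (intro hull_inc) (auto simp: octahedron_vertices_def)
  have "0 = (1/2) *\<^sub>R axis 1 1 + (1/2) *\<^sub>R (- axis 1 (1::real) :: real^3)"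
    by simp
  then have zero: "0 \<in> ?H"
    using convexD[OF convex_convex_hull, of "axis 1 1" octahedron_vertices "- axis 1 1" "1/2" "1/2"]
    by (simp add: hull_inc octahedron_vertices_def)
  show "octahedron \<subseteq> ?H"
  proof
    fix v assume v: "v \<in> octahedron"
    show "v \<in> ?H"
    proof (cases "v = 0")
      case True with zero show ?thesis by simp
    next
      case False
      define n where "n = l1_norm v"
      have n: "0 < n" "n \<le> 1"
        using v False l1_norm_nonneg[of v] l1_norm_eq_0_iff[of v] by (auto simp: n_def octahedron_def)
      have "(\<Sum>i\<in>UNIV. (\<bar>v$i\<bar> / n) *\<^sub>R ((if v$i \<ge> 0 then 1 else -1) *\<^sub>R axis i 1)) \<in> ?H"
        using n by (intro convex_sum convex_convex_hull signed_axis)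
          (auto simp: n_def l1_norm_def sum_divide_distrib[symmetric])
      moreover have "(\<Sum>i\<in>UNIV. (\<bar>v$i\<bar> / n) *\<^sub>R ((if v$i \<ge> 0 then 1 else -1) *\<^sub>R axis i 1)) = (1 / n) *\<^sub>R v"
        by (simp add: vec_eq_iff sum_3 axis_def forall_3)
      ultimately have "n *\<^sub>R ((1 / n) *\<^sub>R v) + (1 - n) *\<^sub>R 0 \<in> ?H"
        using n zero by (intro convexD convex_convex_hull) auto
      then show ?thesis using n by simp
    qed
  qed
qed

lemma compact_octahedron: "compact octahedron"
  unfolding octahedron_eq_convex_hull octahedron_vertices_def
  by (intro compact_convex_hull finite_imp_compact) simp

lemma interior_octahedron: "interior octahedron = {v. l1_norm v < 1}"
proof
  show "{v. l1_norm v < 1} \<subseteq> interior octahedron"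
    by (rule interior_maximal)
       (auto simp: octahedron_def intro!: open_Collect_less continuous_intros)
next
  show "interior octahedron \<subseteq> {v. l1_norm v < 1}"
  proof
    fix v assume v: "v \<in> interior octahedron"
    then obtain e where e: "e > 0" "ball v e \<subseteq> octahedron" by (meson mem_interior)
    have "l1_norm v \<le> 1" using v interior_subset octahedron_def by blast
    moreover have "l1_norm v \<noteq> 1"
    proof
      assume n1: "l1_norm v = 1"
      then have "v \<noteq> 0" using l1_norm_eq_0_iff[of v] by auto
      define t where "t = e / (2 * norm v)"
      have t: "t > 0" "t * norm v < e" using e \<open>v \<noteq> 0\<close> by (auto simp: t_def)
      then have "(1 + t) *\<^sub>R v \<in> ball v e"
        by (simp add: dist_norm algebra_simps)
      then have "l1_norm ((1 + t) *\<^sub>R v) \<le> 1" using e octahedron_def by blast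
      then show False using n1 t by (simp add: l1_norm_scale)
    qed
    ultimately show "v \<in> {v. l1_norm v < 1}" by simp
  qed
qed

lemma rel_frontier_octahedron: "rel_frontier octahedron = {v. l1_norm v = 1}"
proof -
  have "0 \<in> interior octahedron" by (simp add: interior_octahedron l1_norm_def)
  then have "rel_frontier octahedron = frontier octahedron"
    by (intro rel_frontier_nonempty_interior) blast
  also have "\<dots> = {v. l1_norm v = 1}"
    unfolding frontier_def interior_octahedron closure_closed[OF compact_imp_closed[OF compact_octahedron]]
    by (auto simp: octahedron_def)
  finally show ?thesis .
qed

(* delta_point sends the vertices e_1, e_2, e_3, -e_3, -e_2, -e_1 of the octahedron to
   delta_12, delta_13, delta_14, delta_23, delta_24, delta_34; delta_coords inverts it. *)
definition delta_linear :: "real^3 \<Rightarrow> real^4" where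
  "delta_linear v = vector [(v$1 + v$2 + v$3) / 2, (v$1 - v$2 - v$3) / 2,
                            (- v$1 + v$2 - v$3) / 2, (- v$1 - v$2 + v$3) / 2]"

definition delta_point :: "real^3 \<Rightarrow> real^4" where
  "delta_point v = vector [1/2, 1/2, 1/2, 1/2] + delta_linear v"

definition delta_coords :: "real^4 \<Rightarrow> real^3" where
  "delta_coords p = vector [(p$1 + p$2 - p$3 - p$4) / 2, (p$1 - p$2 + p$3 - p$4) / 2,
                            (p$1 - p$2 - p$3 + p$4) / 2]"

lemma delta_coords_point [simp]: "delta_coords (delta_point v) = v"
  unfolding delta_coords_def delta_point_def delta_linear_def vec_eq_iff forall_3
  by (simp add: field_simps)

lemma linear_delta_linear: "linear delta_linear"
  unfolding linear_iff delta_linear_def vec_eq_iff forall_4 by (simp add: field_simps)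

lemma inj_delta_linear: "inj delta_linear"
proof (rule injI)
  fix v w assume "delta_linear v = delta_linear w"
  then have "delta_point v = delta_point w" by (simp add: delta_point_def)
  then show "v = w" by (metis delta_coords_point)
qed

lemma Delta42_eq_octahedron_image: "Delta42 = delta_point ` octahedron"
proof -
  define c :: "real^4" where "c = vector [1/2, 1/2, 1/2, 1/2]"
  have "delta_point (axis 1 1) = vector [1, 1, 0, 0]" "delta_point (axis 2 1) = vector [1, 0, 1, 0]"
    "delta_point (axis 3 1) = vector [1, 0, 0, 1]" "delta_point (- axis 3 1) = vector [0, 1, 1, 0]"
    "delta_point (- axis 2 1) = vector [0, 1, 0, 1]" "delta_point (- axis 1 1) = vector [0, 0, 1, 1]"
    by (simp_all add: delta_point_def delta_linear_def axis_def vec_eq_iff forall_4)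
  then have "Delta42 = convex hull ((+) c ` delta_linear ` octahedron_vertices)"
    unfolding Delta42_def octahedron_vertices_def image_image c_def delta_point_def[symmetric] by simp
  also have "\<dots> = (+) c ` delta_linear ` (convex hull octahedron_vertices)"
    by (simp only: convex_hull_translation convex_hull_linear_image[OF linear_delta_linear])
  also have "\<dots> = delta_point ` octahedron"
    by (simp add: octahedron_eq_convex_hull image_image delta_point_def c_def)
  finally show ?thesis .
qed

lemma rel_frontier_Delta42: "rel_frontier Delta42 = delta_point ` {v. l1_norm v = 1}"
proof -
  have bl: "bounded_linear delta_linear"
    using linear_delta_linear linear_conv_bounded_linear by blast
  have "closure (delta_linear ` octahedron) = delta_linear ` octahedron"
    using compact_octahedron bl
    by (simp add: closure_closed compact_imp_closed compact_continuous_image linear_continuous_on)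
  moreover have "rel_interior (delta_linear ` octahedron) = delta_linear ` rel_interior octahedron"
    by (rule rel_interior_injective_linear_image[OF bl inj_delta_linear])
  ultimately have rf: "rel_frontier (delta_linear ` octahedron) = delta_linear ` rel_frontier octahedron"
    unfolding rel_frontier_def closure_closed[OF compact_imp_closed[OF compact_octahedron]]
      image_set_diff[OF inj_delta_linear] by simp
  have dp: "delta_point ` S = (+) (vector [1/2, 1/2, 1/2, 1/2]) ` delta_linear ` S" for S
    by (simp add: image_image delta_point_def)
  show ?thesis
    unfolding Delta42_eq_octahedron_image dp rel_frontier_translation rf rel_frontier_octahedron ..
qed

lemma Delta42_coords:
  assumes "p \<in> Delta42"
  shows "p = delta_point (delta_coords p)" and "l1_norm (delta_coords p) \<le> 1"
    and "p \<in> rel_frontier Delta42 \<longleftrightarrow> l1_norm (delta_coords p) = 1"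
proof -
  obtain v where v: "l1_norm v \<le> 1" "p = delta_point v"
    using assms by (auto simp: Delta42_eq_octahedron_image octahedron_def)
  then show "p = delta_point (delta_coords p)" and "l1_norm (delta_coords p) \<le> 1" by simp_all
  show "p \<in> rel_frontier Delta42 \<longleftrightarrow> l1_norm (delta_coords p) = 1"
    unfolding rel_frontier_Delta42 using v by (auto, metis delta_coords_point)
qed

lemma delta_point_in_Delta42: "l1_norm v \<le> 1 \<Longrightarrow> delta_point v \<in> Delta42"
  by (simp add: Delta42_eq_octahedron_image octahedron_def)

lemma compact_Delta42: "compact Delta42"
  unfolding Delta42_def by (intro compact_convex_hull finite_imp_compact) simp

section \<open>The glued space\<close>

(* The RP^2 factor enters through its Veronese embedding, damped by the squared distance of
   the octahedral coordinates to the boundary, so that it is collapsed exactly over it. *)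
definition glue_map :: "real^4 \<Rightarrow> real^3^3 \<Rightarrow> (real^3^3) \<times> (real^3)" where
  "glue_map p A = ((1 - l1_norm (delta_coords p))\<^sup>2 *\<^sub>R A, delta_coords p)"

lemma continuous_on_glue_map: "continuous_on UNIV (\<lambda>z. glue_map (fst z) (snd z))"
  unfolding glue_map_def[abs_def] delta_coords_def by (intro continuous_intros) auto

lemma glue_map_veronese_eq_iff:
  assumes p: "p \<in> Delta42" "p' \<in> Delta42" and s: "s \<noteq> 0" "s' \<noteq> 0"
  shows "glue_map p (veronese (sgn s)) = glue_map p' (veronese (sgn s')) \<longleftrightarrow>
    (p, proj_class s) = (p', proj_class s') \<or> p = p' \<and> p \<in> rel_frontier Delta42"
proof
  assume eq: "glue_map p (veronese (sgn s)) = glue_map p' (veronese (sgn s'))"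
  then have "p = p'"
    using p Delta42_coords(1) by (metis glue_map_def snd_conv)
  show "(p, proj_class s) = (p', proj_class s') \<or> p = p' \<and> p \<in> rel_frontier Delta42"
  proof (cases "l1_norm (delta_coords p) = 1")
    case True
    then show ?thesis using p \<open>p = p'\<close> Delta42_coords(3) by auto
  next
    case False
    then have "veronese (sgn s) = veronese (sgn s')"
      using eq \<open>p = p'\<close> by (simp add: glue_map_def)
    then have "proj_class s = proj_class s'"
      using s veronese_sgn_eq_imp_scale proj_class_eq_iff by metis
    then show ?thesis using \<open>p = p'\<close> by simp
  qed
next
  assume "(p, proj_class s) = (p', proj_class s') \<or> p = p' \<and> p \<in> rel_frontier Delta42"
  then show "glue_map p (veronese (sgn s)) = glue_map p' (veronese (sgn s'))"
  proof
    assume "(p, proj_class s) = (p', proj_class s')"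
    then have "p = p'" and "proj_class s = proj_class s'" by simp_all
    then obtain c where "c \<noteq> 0" "s' = c *\<^sub>R s"
      using s proj_class_eq_iff[of s s'] by auto
    then show ?thesis using \<open>p = p'\<close> by (simp add: veronese_sgn_scale)
  next
    assume "p = p' \<and> p \<in> rel_frontier Delta42"
    then have "p = p'" "l1_norm (delta_coords p) = 1" using p Delta42_coords(3) by auto
    then show ?thesis by (simp add: glue_map_def)
  qed
qed

lemma glued_space_homeomorphic:
  "glued_space homeomorphic_space
     top_of_set ((\<lambda>(p, s). glue_map p (veronese (sgn s))) ` (Delta42 \<times> (UNIV - {0})))"
proof -
  have "continuous_on (UNIV - {0}) (\<lambda>s :: real^3. veronese (sgn s))"
    by (intro continuous_intros) auto
  then obtain V where V: "continuous_map RP2 euclidean V"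
    and V_class: "\<And>s. s \<noteq> 0 \<Longrightarrow> V (proj_class s) = veronese (sgn s)"
    using proj_space_lift veronese_sgn_scale by blast
  define X where "X = prod_topology (top_of_set Delta42) RP2"
  define \<Phi> where "\<Phi> = (\<lambda>z. glue_map (fst z) (V (snd z)))"
  have tX: "topspace X = Delta42 \<times> proj_class ` (UNIV - {0})"
    by (simp add: X_def topspace_proj_space)
  have fst: "continuous_map X euclidean fst"
    using continuous_map_fst[of "top_of_set Delta42" RP2] by (simp add: X_def continuous_map_in_subtopology)
  have snd: "continuous_map X euclidean (\<lambda>z. V (snd z))"
    using continuous_map_compose[OF continuous_map_snd V] by (simp add: X_def o_def)
  have pair: "continuous_map X euclidean (\<lambda>z. (fst z, V (snd z)))"
    using continuous_map_pairedI[OF fst snd] by simp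
  have glue: "continuous_map euclidean euclidean (\<lambda>z. glue_map (fst z) (snd z))"
    using continuous_on_glue_map by simp
  have \<Phi>: "continuous_map X euclidean \<Phi>"
    using continuous_map_compose[OF pair glue] by (simp add: \<Phi>_def o_def)
  have "compact_space X"
    unfolding X_def compact_space_prod_topology
    by (simp add: compact_Delta42 compact_space_proj_space compact_space_subtopology)
  then have "glued_space homeomorphic_space subtopology euclidean (\<Phi> ` topspace X)"
    unfolding glued_space_def X_def[symmetric]
  proof (rule quotient_space_homeomorphic_image[OF \<Phi> _ Hausdorff_space_euclidean])
    fix z z' assume "z \<in> topspace X" "z' \<in> topspace X"
    then obtain p s p' s' where z: "z = (p, proj_class s)" "z' = (p', proj_class s')"
      "p \<in> Delta42" "p' \<in> Delta42" "s \<noteq> 0" "s' \<noteq> 0"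
      unfolding tX by auto
    then show "(z = z' \<or> fst z = fst z' \<and> fst z \<in> rel_frontier Delta42) \<longleftrightarrow> \<Phi> z = \<Phi> z'"
      using glue_map_veronese_eq_iff[of p p' s s'] by (simp add: \<Phi>_def V_class)
  qed
  moreover have "\<Phi> ` topspace X = (\<lambda>(p, s). glue_map p (veronese (sgn s))) ` (Delta42 \<times> (UNIV - {0}))"
    unfolding tX \<Phi>_def by (force simp: V_class)
  ultimately show ?thesis by simp
qed

lemma orbit_invariant_image:
  "orbit_invariant ` (UNIV - {0}) = (\<lambda>(p, s). glue_map p (veronese (sgn s))) ` (Delta42 \<times> (UNIV - {0}))"
proof (intro subset_antisym image_subsetI)
  fix x :: "real^6" assume "x \<in> UNIV - {0}"
  then have w: "orbit_weight x > 0" by (simp add: orbit_weight_pos)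
  define D where "D = (1 / orbit_weight x) *\<^sub>R pair_differences x"
  define P where "P = pair_products x"
  define s where "s = (if P = 0 then axis 1 1 else P)"
  have margin: "1 - l1_norm D = norm P / orbit_weight x"
    using w by (simp add: D_def P_def l1_norm_scale orbit_weight_def field_simps)
  then have "(1 - l1_norm D) *\<^sub>R sgn s = (1 / orbit_weight x) *\<^sub>R P"
    by (simp add: s_def sgn_div_norm)
  moreover have "norm P / orbit_weight x \<ge> 0" using w by simp
  then have "l1_norm D \<le> 1" using margin by linarith
  ultimately have "orbit_invariant x = glue_map (delta_point D) (veronese (sgn s))"
    by (simp add: orbit_invariant_def glue_map_def veronese_scale[symmetric]
        D_def[symmetric] P_def[symmetric])
  moreover have "(delta_point D, s) \<in> Delta42 \<times> (UNIV - {0})"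
    using \<open>l1_norm D \<le> 1\<close> by (simp add: delta_point_in_Delta42 s_def)
  ultimately show "orbit_invariant x \<in> (\<lambda>(p, s). glue_map p (veronese (sgn s))) ` (Delta42 \<times> (UNIV - {0}))"
    by force
next
  fix z assume "z \<in> Delta42 \<times> (UNIV - {0 :: real^3})"
  then obtain p s where z: "z = (p, s)" "p \<in> Delta42" "s \<noteq> 0" by auto
  define D where "D = delta_coords p"
  have D: "l1_norm D \<le> 1" using Delta42_coords(2)[OF z(2)] by (simp add: D_def)
  obtain x where x: "pair_products x = (1 - l1_norm D) *\<^sub>R sgn s" "pair_differences x = D"
    using pair_products_differences_surj by blast
  have w: "orbit_weight x = 1"
    using D z by (simp add: orbit_weight_def x norm_sgn)
  then have "x \<noteq> 0" using orbit_weight_scale[of 0 x] by auto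
  moreover have "orbit_invariant x = glue_map p (veronese (sgn s))"
    by (simp add: orbit_invariant_def glue_map_def veronese_scale w x D_def)
  ultimately
  show "(\<lambda>(p, s). glue_map p (veronese (sgn s))) z \<in> orbit_invariant ` (UNIV - {0})"
    using z by force
qed

theorem mainTheorem17:
  shows "RP5_orbit_space homeomorphic_space glued_space"
proof -
  have "glued_space homeomorphic_space top_of_set (orbit_invariant ` (UNIV - {0}))"
    using glued_space_homeomorphic orbit_invariant_image by simp
  then show ?thesis
    using RP5_orbit_space_homeomorphic homeomorphic_space_sym homeomorphic_space_trans by blast
qed

end
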